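(* For each $\kappa\in[0,1]$, the problem (SMOP3) $$\min_{(g,h)}\ \tilde f_\kappa(g,h)=\kappa g+(1-\kappa)h\quad\text{subject to }(g,h)\in S,$$ where $$S=\Big\{(\hat g,\hat h)\in\mathbb R^2:\ \exists(\bar{\mathbf a},\mathbf s)\in\mathbb S \text{ with } \hat g=g(\bar{\mathbf a}),\ \hat h=h(\mathbf s),\ \text{and }\exists\,\mathbf z=(\mathbf z_1^\top,\dots,\mathbf z_{\mathcal I}^\top)^\top\in\mathbb D \text{ with } \bar{\mathbf a}=\tfrac1{\mathcal I}\textstyle\sum_{i=1}^{\mathcal I}\mathbf z_i\Big\},$$ has an optimal solution. For $\kappa\in(0,1)$ the optimal solution is unique.
   Context: Setting (a network of $\mathcal I\in\mathbb N$ residential energy systems with batteries). Fix an integer horizon $N\ge 2$, a time $k\in\mathbb N_0$, a step length $T>0$, and write $[m:n]=\{m,\dots,n\}$. For each $i\in[1:\mathcal I]$ the following are given: constants $\alpha_i,\beta_i,\gamma_i\in(0,1]$, a capacity $C_i\ge0$, bounds $\underline u_i<0<\bar u_i$, an initial state $x_i(k)\in[0,C_i]$, and data $w_i(n)\in\mathbb R$ for $n\in[k:k+N-1]$. Let $\mathbb U_i$ be the set of $(u^-,u^+)\in\mathbb R^2$ with $\underline u_i\le u^-\le0$, $0\le u^+\le\bar u_i$ and $0\le u^-/\underline u_i+u^+/\bar u_i\le1$. Let $\mathbb D_i\subset\mathbb R^N$ be the set of $\mathbf z_i=(z_i(k),\dots,z_i(k+N-1))^\top$ for which there exist $(u_i^-(n),u_i^+(n))\in\mathbb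 U_i$, $n\in[k:k+N-1]$, with $x_i(n+1)=\alpha_i x_i(n)+T(\beta_iu_i^+(n)+u_i^-(n))\in[0,C_i]$ and $z_i(n)=w_i(n)+u_i^+(n)+\gamma_iu_i^-(n)$ for all $n\in[k:k+N-1]$; let $\mathbb D=\mathbb D_1\times\dots\times\mathbb D_{\mathcal I}$. A reference vector $\bar\zeta\in\mathbb R^N$ and tube bounds $\underline{\mathbf c},\bar{\mathbf c}\in\mathbb R^N$ are given, and $$\mathbb S=\Big\{(\bar{\mathbf z},\mathbf s)\in\mathbb R^N\times\mathbb R^{2N}_{\ge0}:\ \begin{pmatrix}I\\-I\end{pmatrix}\bar{\mathbf z}-\mathbf s\le\begin{pmatrix}\bar{\mathbf c}\\-\underline{\mathbf c}\end{pmatrix}\Big\}.$$ The objective functions are $g(\bar{\mathbf z})=\frac1N\|\bar{\mathbf z}-\bar\zeta\|_2^2$ on $\mathbb R^N$ and $h(\mathbf s)=\|\mathbf s\|_2^2$ on $\mathbb R^{2N}_{\ge0}$. *)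

theory Defs
  imports Complex_Main
begin

text \<open>Vectors in R^N are functions nat => real, only the entries 0..N-1 being relevant;
 entry j corresponds to time k+j. Vectors in R^(2N) use entries 0..2N-1.\<close>

definition Uset :: "real \<Rightarrow> real \<Rightarrow> (real \<times> real) set" where
  "Uset ul uh = {(um, up). ul \<le> um \<and> um \<le> 0 \<and> 0 \<le> up \<and> up \<le> uh
      \<and> 0 \<le> um / ul + up / uh \<and> um / ul + up / uh \<le> 1}"

definition Dset :: "nat \<Rightarrow> real \<Rightarrow> real \<Rightarrow> real \<Rightarrow> real \<Rightarrow> real \<Rightarrow> real \<Rightarrow> real
      \<Rightarrow> real \<Rightarrow> (nat \<Rightarrow> real) \<Rightarrow> (nat \<Rightarrow> real) set" where
  "Dset N T \<alpha> \<beta> \<gamma> C ul uh x0 w = {z. \<exists>um up x :: nat \<Rightarrow> real. x 0 = x0 \<and>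
      (\<forall>j<N. (um j, up j) \<in> Uset ul uh
         \<and> x (Suc j) = \<alpha> * x j + T * (\<beta> * up j + um j)
         \<and> 0 \<le> x (Suc j) \<and> x (Suc j) \<le> C
         \<and> z j = w j + up j + \<gamma> * um j)}"

definition SSet :: "nat \<Rightarrow> (nat \<Rightarrow> real) \<Rightarrow> (nat \<Rightarrow> real) \<Rightarrow> ((nat \<Rightarrow> real) \<times> (nat \<Rightarrow> real)) set" where
  "SSet N cup clo = {(zb, s). (\<forall>j<2*N. 0 \<le> s j) \<and>
      (\<forall>j<N. zb j - s j \<le> cup j \<and> - zb j - s (N + j) \<le> - clo j)}"

definition gfun :: "nat \<Rightarrow> (nat \<Rightarrow> real) \<Rightarrow> (nat \<Rightarrow> real) \<Rightarrow> real" where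
  "gfun N zeta zb = (1 / real N) * (\<Sum>j<N. (zb j - zeta j)^2)"

definition hfun :: "nat \<Rightarrow> (nat \<Rightarrow> real) \<Rightarrow> real" where
  "hfun N s = (\<Sum>j<2*N. (s j)^2)"

definition Sfeas where
  "Sfeas II N T \<alpha> \<beta> \<gamma> C ul uh x0 w zeta cup clo =
     {(gh, hh). \<exists>ab s. (ab, s) \<in> SSet N cup clo \<and> gh = gfun N zeta ab \<and> hh = hfun N s \<and>
        (\<exists>z :: nat \<Rightarrow> nat \<Rightarrow> real.
           (\<forall>i\<in>{1..II}. z i \<in> Dset N T (\<alpha> i) (\<beta> i) (\<gamma> i) (C i) (ul i) (uh i) (x0 i) (w i)) \<and>
           (\<forall>j<N. ab j = (1 / real II) * (\<Sum>i=1..II. z i j)))}"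

end

theory Submission
  imports Defs "HOL-Analysis.Analysis"
begin

text \<open>For a fixed aggregate \<open>ab\<close> the least value of \<open>h\<close> over admissible slacks is attained
  at the componentwise smallest slack, so the problem reduces to minimising a continuous function
  of the battery trajectories of all households. Normalised to vanish beyond the horizon, these
  trajectories form a compact set, which gives a minimiser. The lifted feasible set of pairs
  \<open>(ab, s)\<close> is convex and both \<open>g\<close> and \<open>h\<close> are strictly convex, so for \<open>0 < \<kappa> < 1\<close> the
  midpoint of two optimal lifts would be strictly better unless they agree in \<open>ab\<close> and \<open>s\<close>;
  hence the optimal pair \<open>(g, h)\<close> is unique.\<close>

lemma PiE_eq_PiE_UNIV: "PiE I S = PiE UNIV (\<lambda>i. if i \<in> I then S i else {undefined})"
proof (intro set_eqI iffI)
  fix f assume "f \<in> PiE I S"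
  then show "f \<in> PiE UNIV (\<lambda>i. if i \<in> I then S i else {undefined})"
    by (simp add: PiE_iff extensional_def)
next
  fix f assume "f \<in> PiE UNIV (\<lambda>i. if i \<in> I then S i else {undefined})"
  then have f: "f i \<in> (if i \<in> I then S i else {undefined})" for i
    by blast
  have "f i \<in> S i" if "i \<in> I" for i
    using f[of i] that by simp
  moreover have "f i = undefined" if "i \<notin> I" for i
    using f[of i] that by simp
  ultimately show "f \<in> PiE I S"
    by (simp add: PiE_iff extensional_def)
qed

lemma compact_PiE:
  fixes S :: "'a \<Rightarrow> 'b::topological_space set"
  assumes "\<And>i. i \<in> I \<Longrightarrow> compact (S i)"
  shows "compact (PiE I S)"
proof -
  have "compactin (product_topology (\<lambda>i. euclidean) UNIV)
      (PiE UNIV (\<lambda>i. if i \<in> I then S i else {undefined}))"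
    using assms by (simp add: compactin_PiE)
  then show ?thesis
    by (simp add: euclidean_product_topology flip: PiE_eq_PiE_UNIV)
qed

lemma sum_lessThan_double:
  fixes f :: "nat \<Rightarrow> 'a::comm_monoid_add"
  shows "(\<Sum>j<2*N. f j) = (\<Sum>j<N. f j) + (\<Sum>j<N. f (N + j))"
proof -
  have "(\<Sum>j<2*N. f j) = (\<Sum>j<N. f j) + (\<Sum>j=N..<N+N. f j)"
    by (simp add: mult_2 atLeast0LessThan[symmetric] sum.atLeastLessThan_concat)
  also have "(\<Sum>j=N..<N+N. f j) = (\<Sum>j<N. f (N + j))"
    by (simp add: atLeast0LessThan[symmetric] sum.shift_bounds_nat_ivl[of f 0 N N, simplified] add.commute)
  finally show ?thesis .
qed

text \<open>Controls and states are set to zero beyond the horizon, so that the trajectories form a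
  compact set in the product topology.\<close>

definition trajectories :: "nat \<Rightarrow> real \<Rightarrow> real \<Rightarrow> real \<Rightarrow> real \<Rightarrow> real \<Rightarrow> real \<Rightarrow> real
      \<Rightarrow> ((nat \<Rightarrow> real) \<times> (nat \<Rightarrow> real) \<times> (nat \<Rightarrow> real)) set" where
  "trajectories N T \<alpha> \<beta> C ul uh x0 = {(um, up, x). x 0 = x0 \<and>
      (\<forall>j<N. (um j, up j) \<in> Uset ul uh
         \<and> x (Suc j) = \<alpha> * x j + T * (\<beta> * up j + um j)
         \<and> 0 \<le> x (Suc j) \<and> x (Suc j) \<le> C) \<and>
      (\<forall>j\<ge>N. um j = 0 \<and> up j = 0 \<and> x (Suc j) = 0)}"

definition net_consumption :: "real \<Rightarrow> (nat \<Rightarrow> real)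
      \<Rightarrow> (nat \<Rightarrow> real) \<times> (nat \<Rightarrow> real) \<times> (nat \<Rightarrow> real) \<Rightarrow> nat \<Rightarrow> real" where
  "net_consumption \<gamma> w t j = w j + fst (snd t) j + \<gamma> * fst t j"

lemma Dset_iff_trajectory:
  "z \<in> Dset N T \<alpha> \<beta> \<gamma> C ul uh x0 w \<longleftrightarrow>
     (\<exists>t \<in> trajectories N T \<alpha> \<beta> C ul uh x0. \<forall>j<N. z j = net_consumption \<gamma> w t j)"
proof
  assume "z \<in> Dset N T \<alpha> \<beta> \<gamma> C ul uh x0 w"
  then obtain um up x where x0: "x 0 = x0" and step: "\<forall>j<N. (um j, up j) \<in> Uset ul uh
         \<and> x (Suc j) = \<alpha> * x j + T * (\<beta> * up j + um j)
         \<and> 0 \<le> x (Suc j) \<and> x (Suc j) \<le> C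
         \<and> z j = w j + up j + \<gamma> * um j"
    unfolding Dset_def by blast
  let ?cut = "\<lambda>n f j. if j < n then f j else 0"
  have "(?cut N um, ?cut N up, ?cut (Suc N) x) \<in> trajectories N T \<alpha> \<beta> C ul uh x0"
    using x0 step unfolding trajectories_def by auto
  moreover have "\<forall>j<N. z j = net_consumption \<gamma> w (?cut N um, ?cut N up, ?cut (Suc N) x) j"
    using step unfolding net_consumption_def by auto
  ultimately show "\<exists>t \<in> trajectories N T \<alpha> \<beta> C ul uh x0. \<forall>j<N. z j = net_consumption \<gamma> w t j"
    by blast
next
  assume "\<exists>t \<in> trajectories N T \<alpha> \<beta> C ul uh x0. \<forall>j<N. z j = net_consumption \<gamma> w t j"
  then obtain um up x where "(um, up, x) \<in> trajectories N T \<alpha> \<beta> C ul uh x0"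
      and "\<forall>j<N. z j = w j + up j + \<gamma> * um j"
    unfolding net_consumption_def by auto
  then show "z \<in> Dset N T \<alpha> \<beta> \<gamma> C ul uh x0 w"
    unfolding Dset_def trajectories_def by blast
qed

lemma trajectories_subset_box:
  "trajectories N T \<alpha> \<beta> C ul uh x0 \<subseteq>
     PiE UNIV (\<lambda>j. if j < N then {ul..0} else {0}) \<times>
     PiE UNIV (\<lambda>j. if j < N then {0..uh} else {0}) \<times>
     PiE UNIV (\<lambda>j. if j = 0 then {x0} else if j \<le> N then {0..C} else {0})"
  (is "_ \<subseteq> ?Um \<times> ?Up \<times> ?X")
proof
  fix t assume t: "t \<in> trajectories N T \<alpha> \<beta> C ul uh x0"
  obtain um up x where t_eq: "t = (um, up, x)" by (cases t)
  from t have x0: "x 0 = x0"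
    and u: "\<forall>j<N. (um j, up j) \<in> Uset ul uh \<and> 0 \<le> x (Suc j) \<and> x (Suc j) \<le> C"
    and tail: "\<forall>j\<ge>N. um j = 0 \<and> up j = 0 \<and> x (Suc j) = 0"
    unfolding t_eq trajectories_def by auto
  have "x j \<in> (if j = 0 then {x0} else if j \<le> N then {0..C} else {0})" for j
    using x0 u tail by (cases j) (auto simp: not_less_eq_eq)
  moreover have "um j \<in> (if j < N then {ul..0} else {0})" "up j \<in> (if j < N then {0..uh} else {0})" for j
    using u tail by (auto simp: Uset_def not_less)
  ultimately show "t \<in> ?Um \<times> ?Up \<times> ?X"
    unfolding t_eq by (simp add: PiE_iff)
qed

lemma closed_trajectories: "closed (trajectories N T \<alpha> \<beta> C ul uh x0)"
  unfolding trajectories_def Uset_def case_prod_unfold mem_Collect_eq divide_inverse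
  by (intro closed_Collect_conj closed_Collect_all closed_Collect_imp open_Collect_const
        closed_Collect_eq closed_Collect_le continuous_intros
        continuous_on_product_then_coordinatewise)

lemma compact_trajectories: "compact (trajectories N T \<alpha> \<beta> C ul uh x0)"
proof -
  have "compact ((PiE UNIV (\<lambda>j. if j < N then {ul..0} else {0}) \<times>
     PiE UNIV (\<lambda>j. if j < N then {0..uh} else {0}) \<times>
     PiE UNIV (\<lambda>j. if j = 0 then {x0} else if j \<le> N then {0..C} else {0})) \<inter>
     trajectories N T \<alpha> \<beta> C ul uh x0)"
    by (intro compact_Int_closed compact_Times compact_PiE closed_trajectories) auto
  then show ?thesis
    using trajectories_subset_box by (simp add: Int_absorb1)
qed

lemma trajectories_nonempty:
  assumes "0 \<le> \<alpha>" "\<alpha> \<le> 1" "0 \<le> x0" "x0 \<le> C" "ul \<le> 0" "0 \<le> uh"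
  shows "trajectories N T \<alpha> \<beta> C ul uh x0 \<noteq> {}"
proof -
  have "\<alpha> ^ Suc j * x0 \<le> C" for j
    using assms mult_right_mono[OF power_le_one[OF assms(1,2)] assms(3), of "Suc j"] by simp
  then have "(\<lambda>_. 0, \<lambda>_. 0, \<lambda>j. if j \<le> N then \<alpha> ^ j * x0 else 0) \<in> trajectories N T \<alpha> \<beta> C ul uh x0"
    using assms unfolding trajectories_def Uset_def by auto
  then show ?thesis by blast
qed

lemma convex_Uset: "convex (Uset ul uh)"
proof -
  have "Uset ul uh = {p. ul \<le> (1, 0) \<bullet> p} \<inter> {p. (1, 0) \<bullet> p \<le> 0}
      \<inter> {p. 0 \<le> (0, 1) \<bullet> p} \<inter> {p. (0, 1) \<bullet> p \<le> uh}
      \<inter> {p. 0 \<le> (1 / ul, 1 / uh) \<bullet> p} \<inter> {p. (1 / ul, 1 / uh) \<bullet> p \<le> 1}"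
    by (auto simp: Uset_def inner_prod_def)
  also have "convex \<dots>"
    by (intro convex_Int convex_halfspace_ge convex_halfspace_le)
  finally show ?thesis .
qed

lemma trajectories_convex_combination:
  assumes "(um1, up1, x1) \<in> trajectories N T \<alpha> \<beta> C ul uh x0"
    and "(um2, up2, x2) \<in> trajectories N T \<alpha> \<beta> C ul uh x0"
    and "0 \<le> u" "u \<le> 1"
  shows "(\<lambda>j. u * um1 j + (1 - u) * um2 j, \<lambda>j. u * up1 j + (1 - u) * up2 j,
          \<lambda>j. u * x1 j + (1 - u) * x2 j) \<in> trajectories N T \<alpha> \<beta> C ul uh x0"
proof -
  have "(u * um1 j + (1 - u) * um2 j, u * up1 j + (1 - u) * up2 j) \<in> Uset ul uh"
    and "0 \<le> u * x1 (Suc j) + (1 - u) * x2 (Suc j)"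
    and "u * x1 (Suc j) + (1 - u) * x2 (Suc j) \<le> C"
    if "j < N" for j
  proof -
    have "(um1 j, up1 j) \<in> Uset ul uh" "(um2 j, up2 j) \<in> Uset ul uh"
      and "0 \<le> x1 (Suc j)" "x1 (Suc j) \<le> C" "0 \<le> x2 (Suc j)" "x2 (Suc j) \<le> C"
      using assms(1,2) that unfolding trajectories_def by auto
    then show "(u * um1 j + (1 - u) * um2 j, u * up1 j + (1 - u) * up2 j) \<in> Uset ul uh"
      and "0 \<le> u * x1 (Suc j) + (1 - u) * x2 (Suc j)"
      and "u * x1 (Suc j) + (1 - u) * x2 (Suc j) \<le> C"
      using convexD[OF convex_Uset[of ul uh], of "(um1 j, up1 j)" "(um2 j, up2 j)" u "1 - u"]
        convex_bound_le[of "x1 (Suc j)" C "x2 (Suc j)" u "1 - u"] assms(3,4)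
      by auto
  qed
  then show ?thesis
    using assms(1,2) unfolding trajectories_def by (auto simp: algebra_simps)
qed

lemma Dset_convex_combination:
  assumes "z1 \<in> Dset N T \<alpha> \<beta> \<gamma> C ul uh x0 w" "z2 \<in> Dset N T \<alpha> \<beta> \<gamma> C ul uh x0 w"
    and "0 \<le> u" "u \<le> 1"
  shows "(\<lambda>j. u * z1 j + (1 - u) * z2 j) \<in> Dset N T \<alpha> \<beta> \<gamma> C ul uh x0 w"
proof -
  obtain um1 up1 x1 um2 up2 x2 where
      t1: "(um1, up1, x1) \<in> trajectories N T \<alpha> \<beta> C ul uh x0"
        "\<forall>j<N. z1 j = net_consumption \<gamma> w (um1, up1, x1) j" and
      t2: "(um2, up2, x2) \<in> trajectories N T \<alpha> \<beta> C ul uh x0"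
        "\<forall>j<N. z2 j = net_consumption \<gamma> w (um2, up2, x2) j"
    using assms(1,2) unfolding Dset_iff_trajectory by fastforce
  show ?thesis
    unfolding Dset_iff_trajectory
    by (rule bexI[OF _ trajectories_convex_combination[OF t1(1) t2(1) assms(3,4)]])
      (use t1(2) t2(2) in \<open>simp add: net_consumption_def algebra_simps\<close>)
qed

definition tube_slack :: "nat \<Rightarrow> (nat \<Rightarrow> real) \<Rightarrow> (nat \<Rightarrow> real) \<Rightarrow> (nat \<Rightarrow> real) \<Rightarrow> nat \<Rightarrow> real" where
  "tube_slack N cup clo ab j =
     (if j < N then max 0 (ab j - cup j) else max 0 (clo (j - N) - ab (j - N)))"

lemma tube_slack_mem_SSet: "(ab, tube_slack N cup clo ab) \<in> SSet N cup clo"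
  unfolding SSet_def tube_slack_def by auto

lemma hfun_tube_slack:
  "hfun N (tube_slack N cup clo ab) =
     (\<Sum>j<N. (max 0 (ab j - cup j))^2) + (\<Sum>j<N. (max 0 (clo j - ab j))^2)"
  unfolding hfun_def tube_slack_def sum_lessThan_double by simp

lemma hfun_tube_slack_le:
  assumes "(ab, s) \<in> SSet N cup clo"
  shows "hfun N (tube_slack N cup clo ab) \<le> hfun N s"
proof -
  have "(max 0 (ab j - cup j))^2 \<le> (s j)^2" "(max 0 (clo j - ab j))^2 \<le> (s (N + j))^2"
    if "j < N" for j
  proof -
    have "0 \<le> s j" "ab j - s j \<le> cup j" "0 \<le> s (N + j)" "- ab j - s (N + j) \<le> - clo j"
      using assms that unfolding SSet_def by auto
    then show "(max 0 (ab j - cup j))^2 \<le> (s j)^2" "(max 0 (clo j - ab j))^2 \<le> (s (N + j))^2"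
      by (auto intro!: power_mono)
  qed
  then show ?thesis
    unfolding hfun_tube_slack unfolding hfun_def sum_lessThan_double
    by (intro add_mono sum_mono) auto
qed

lemma SSet_convex_combination:
  assumes "(ab1, s1) \<in> SSet N cup clo" "(ab2, s2) \<in> SSet N cup clo" "0 \<le> u" "u \<le> 1"
  shows "(\<lambda>j. u * ab1 j + (1 - u) * ab2 j, \<lambda>j. u * s1 j + (1 - u) * s2 j) \<in> SSet N cup clo"
proof -
  have comb: "u * a + (1 - u) * b \<le> c" if "a \<le> c" "b \<le> c" for a b c :: real
    using convex_bound_le[OF that assms(3)] assms(4) by simp
  have "u * (ab1 j - s1 j) + (1 - u) * (ab2 j - s2 j) \<le> cup j"
    and "u * (- ab1 j - s1 (N + j)) + (1 - u) * (- ab2 j - s2 (N + j)) \<le> - clo j"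
    if "j < N" for j
    using assms(1,2) that unfolding SSet_def by (auto intro!: comb)
  moreover have "0 \<le> u * s1 j + (1 - u) * s2 j" if "j < 2 * N" for j
    using assms that unfolding SSet_def by auto
  ultimately show ?thesis
    unfolding SSet_def by (simp add: algebra_simps)
qed

lemma sum_power2_convex_combination:
  fixes a b c :: "'a \<Rightarrow> real"
  shows "(\<Sum>j\<in>A. (u * a j + (1 - u) * b j - c j)^2) =
     u * (\<Sum>j\<in>A. (a j - c j)^2) + (1 - u) * (\<Sum>j\<in>A. (b j - c j)^2)
       - u * (1 - u) * (\<Sum>j\<in>A. (a j - b j)^2)"
proof -
  have "(u * a j + (1 - u) * b j - c j)^2 =
      u * (a j - c j)^2 + (1 - u) * (b j - c j)^2 - u * (1 - u) * (a j - b j)^2" for j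
    by (simp add: power2_eq_square algebra_simps)
  then show ?thesis
    by (simp add: sum_subtractf sum.distrib sum_distrib_left)
qed

lemma gfun_convex_combination:
  "gfun N zeta (\<lambda>j. u * a j + (1 - u) * b j) =
     u * gfun N zeta a + (1 - u) * gfun N zeta b - u * (1 - u) * (\<Sum>j<N. (a j - b j)^2) / N"
  unfolding gfun_def sum_power2_convex_combination by (simp add: algebra_simps divide_inverse)

lemma hfun_convex_combination:
  "hfun N (\<lambda>j. u * a j + (1 - u) * b j) =
     u * hfun N a + (1 - u) * hfun N b - u * (1 - u) * (\<Sum>j<2*N. (a j - b j)^2)"
  using sum_power2_convex_combination[of u a b "\<lambda>_. 0" "{..<2*N}"] unfolding hfun_def by simp

locale household_network =
  fixes II N :: nat and T :: real
    and \<alpha> \<beta> \<gamma> C ul uh x0 :: "nat \<Rightarrow> real"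
    and w :: "nat \<Rightarrow> nat \<Rightarrow> real"
    and zeta cup clo :: "nat \<Rightarrow> real"
  assumes admissible:
    "\<forall>i\<in>{1..II}. 0 \<le> \<alpha> i \<and> \<alpha> i \<le> 1 \<and> 0 \<le> x0 i \<and> x0 i \<le> C i \<and> ul i \<le> 0 \<and> 0 \<le> uh i"
begin

abbreviation attainable :: "(real \<times> real) set" where
  "attainable \<equiv> Sfeas II N T \<alpha> \<beta> \<gamma> C ul uh x0 w zeta cup clo"

definition feasible_pairs :: "((nat \<Rightarrow> real) \<times> (nat \<Rightarrow> real)) set" where
  "feasible_pairs = {(ab, s). (ab, s) \<in> SSet N cup clo \<and>
     (\<exists>z. (\<forall>i\<in>{1..II}. z i \<in> Dset N T (\<alpha> i) (\<beta> i) (\<gamma> i) (C i) (ul i) (uh i) (x0 i) (w i)) \<and>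
          (\<forall>j<N. ab j = 1 / real II * (\<Sum>i=1..II. z i j)))}"

lemma mem_attainable_iff:
  "p \<in> attainable \<longleftrightarrow> (\<exists>ab s. (ab, s) \<in> feasible_pairs \<and> p = (gfun N zeta ab, hfun N s))"
  unfolding Sfeas_def feasible_pairs_def by (cases p) blast

lemma feasible_pairs_convex_combination:
  assumes "(ab1, s1) \<in> feasible_pairs" "(ab2, s2) \<in> feasible_pairs" "0 \<le> u" "u \<le> 1"
  shows "(\<lambda>j. u * ab1 j + (1 - u) * ab2 j, \<lambda>j. u * s1 j + (1 - u) * s2 j) \<in> feasible_pairs"
proof -
  obtain z1 z2 where
    z1: "\<forall>i\<in>{1..II}. z1 i \<in> Dset N T (\<alpha> i) (\<beta> i) (\<gamma> i) (C i) (ul i) (uh i) (x0 i) (w i)"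
        "\<forall>j<N. ab1 j = 1 / real II * (\<Sum>i=1..II. z1 i j)" and
    z2: "\<forall>i\<in>{1..II}. z2 i \<in> Dset N T (\<alpha> i) (\<beta> i) (\<gamma> i) (C i) (ul i) (uh i) (x0 i) (w i)"
        "\<forall>j<N. ab2 j = 1 / real II * (\<Sum>i=1..II. z2 i j)"
    using assms(1,2) unfolding feasible_pairs_def by auto
  have "(\<lambda>j. u * ab1 j + (1 - u) * ab2 j, \<lambda>j. u * s1 j + (1 - u) * s2 j) \<in> SSet N cup clo"
    using assms unfolding feasible_pairs_def by (auto intro: SSet_convex_combination)
  moreover have "\<forall>i\<in>{1..II}. (\<lambda>j. u * z1 i j + (1 - u) * z2 i j)
      \<in> Dset N T (\<alpha> i) (\<beta> i) (\<gamma> i) (C i) (ul i) (uh i) (x0 i) (w i)"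
    using z1(1) z2(1) assms(3,4) by (simp add: Dset_convex_combination)
  moreover have "\<forall>j<N. u * ab1 j + (1 - u) * ab2 j
      = 1 / real II * (\<Sum>i=1..II. u * z1 i j + (1 - u) * z2 i j)"
  proof (intro allI impI)
    fix j assume "j < N"
    then have "u * ab1 j + (1 - u) * ab2 j
        = 1 / real II * (u * (\<Sum>i=1..II. z1 i j) + (1 - u) * (\<Sum>i=1..II. z2 i j))"
      using z1(2) z2(2) by (simp add: algebra_simps divide_inverse)
    also have "\<dots> = 1 / real II * (\<Sum>i=1..II. u * z1 i j + (1 - u) * z2 i j)"
      by (simp add: sum.distrib sum_distrib_left)
    finally show "u * ab1 j + (1 - u) * ab2 j
        = 1 / real II * (\<Sum>i=1..II. u * z1 i j + (1 - u) * z2 i j)" .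
  qed
  ultimately show ?thesis
    unfolding feasible_pairs_def
    by (auto intro!: exI[of _ "\<lambda>i j. u * z1 i j + (1 - u) * z2 i j"])
qed

definition profiles :: "(nat \<Rightarrow> (nat \<Rightarrow> real) \<times> (nat \<Rightarrow> real) \<times> (nat \<Rightarrow> real)) set" where
  "profiles = PiE {1..II} (\<lambda>i. trajectories N T (\<alpha> i) (\<beta> i) (C i) (ul i) (uh i) (x0 i))"

definition aggregate :: "(nat \<Rightarrow> (nat \<Rightarrow> real) \<times> (nat \<Rightarrow> real) \<times> (nat \<Rightarrow> real)) \<Rightarrow> nat \<Rightarrow> real" where
  "aggregate P j = 1 / real II * (\<Sum>i=1..II. net_consumption (\<gamma> i) (w i) (P i) j)"

lemma compact_profiles: "compact profiles"
  unfolding profiles_def by (intro compact_PiE compact_trajectories)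

lemma profiles_nonempty: "profiles \<noteq> {}"
  using admissible trajectories_nonempty unfolding profiles_def by (simp add: PiE_eq_empty_iff)

lemma continuous_on_aggregate: "continuous_on UNIV (\<lambda>P. aggregate P j)"
  unfolding aggregate_def net_consumption_def
  by (intro continuous_intros continuous_on_product_then_coordinatewise continuous_on_id)

lemma feasible_pairs_iff_profile:
  "(ab, s) \<in> feasible_pairs \<longleftrightarrow>
     (ab, s) \<in> SSet N cup clo \<and> (\<exists>P\<in>profiles. \<forall>j<N. ab j = aggregate P j)"
proof -
  have "(\<exists>z. (\<forall>i\<in>{1..II}. z i \<in> Dset N T (\<alpha> i) (\<beta> i) (\<gamma> i) (C i) (ul i) (uh i) (x0 i) (w i)) \<and>
          (\<forall>j<N. ab j = 1 / real II * (\<Sum>i=1..II. z i j)))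
      \<longleftrightarrow> (\<exists>P\<in>profiles. \<forall>j<N. ab j = aggregate P j)"
  proof
    assume "\<exists>z. (\<forall>i\<in>{1..II}. z i \<in> Dset N T (\<alpha> i) (\<beta> i) (\<gamma> i) (C i) (ul i) (uh i) (x0 i) (w i)) \<and>
          (\<forall>j<N. ab j = 1 / real II * (\<Sum>i=1..II. z i j))"
    then obtain z where z: "\<forall>i\<in>{1..II}. z i \<in> Dset N T (\<alpha> i) (\<beta> i) (\<gamma> i) (C i) (ul i) (uh i) (x0 i) (w i)"
      and ab: "\<forall>j<N. ab j = 1 / real II * (\<Sum>i=1..II. z i j)"
      by blast
    obtain t where t: "\<forall>i\<in>{1..II}. t i \<in> trajectories N T (\<alpha> i) (\<beta> i) (C i) (ul i) (uh i) (x0 i)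
        \<and> (\<forall>j<N. z i j = net_consumption (\<gamma> i) (w i) (t i) j)"
      using z unfolding Dset_iff_trajectory by metis
    define P where "P = restrict t {1..II}"
    have "P \<in> profiles"
      using t unfolding profiles_def P_def by (simp add: restrict_PiE_iff)
    moreover have "\<forall>j<N. ab j = aggregate P j"
    proof (intro allI impI)
      fix j assume "j < N"
      then have "(\<Sum>i=1..II. z i j) = (\<Sum>i=1..II. net_consumption (\<gamma> i) (w i) (P i) j)"
        using t unfolding P_def by (intro sum.cong) auto
      then show "ab j = aggregate P j"
        using ab \<open>j < N\<close> unfolding aggregate_def by simp
    qed
    ultimately show "\<exists>P\<in>profiles. \<forall>j<N. ab j = aggregate P j"
      by blast
  next
    assume "\<exists>P\<in>profiles. \<forall>j<N. ab j = aggregate P j"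
    then obtain P where "P \<in> profiles" and ab: "\<forall>j<N. ab j = aggregate P j"
      by blast
    then have "\<forall>i\<in>{1..II}. P i \<in> trajectories N T (\<alpha> i) (\<beta> i) (C i) (ul i) (uh i) (x0 i)"
      unfolding profiles_def by blast
    then have "\<forall>i\<in>{1..II}. net_consumption (\<gamma> i) (w i) (P i)
        \<in> Dset N T (\<alpha> i) (\<beta> i) (\<gamma> i) (C i) (ul i) (uh i) (x0 i) (w i)"
      unfolding Dset_iff_trajectory by blast
    with ab show "\<exists>z. (\<forall>i\<in>{1..II}. z i \<in> Dset N T (\<alpha> i) (\<beta> i) (\<gamma> i) (C i) (ul i) (uh i) (x0 i) (w i)) \<and>
          (\<forall>j<N. ab j = 1 / real II * (\<Sum>i=1..II. z i j))"
      unfolding aggregate_def by (intro exI[of _ "\<lambda>i. net_consumption (\<gamma> i) (w i) (P i)"]) simp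
  qed
  then show ?thesis
    unfolding feasible_pairs_def by simp
qed

theorem exists_minimizer:
  assumes "0 \<le> \<kappa>" "\<kappa> \<le> 1"
  shows "\<exists>p\<in>attainable. \<forall>q\<in>attainable.
           \<kappa> * fst p + (1 - \<kappa>) * snd p \<le> \<kappa> * fst q + (1 - \<kappa>) * snd q"
proof -
  define F where "F P = \<kappa> * gfun N zeta (aggregate P)
      + (1 - \<kappa>) * hfun N (tube_slack N cup clo (aggregate P))" for P
  have "continuous_on profiles F"
    unfolding F_def gfun_def hfun_tube_slack
    by (intro continuous_intros continuous_on_aggregate[THEN continuous_on_subset]) simp_all
  then obtain P0 where P0: "P0 \<in> profiles" "\<forall>P\<in>profiles. F P0 \<le> F P"
    using continuous_attains_inf[OF compact_profiles profiles_nonempty] by blast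
  define p0 where "p0 = (gfun N zeta (aggregate P0), hfun N (tube_slack N cup clo (aggregate P0)))"
  have "p0 \<in> attainable"
    unfolding p0_def mem_attainable_iff feasible_pairs_iff_profile
    using P0(1) tube_slack_mem_SSet by blast
  moreover have "\<kappa> * fst p0 + (1 - \<kappa>) * snd p0 \<le> \<kappa> * fst q + (1 - \<kappa>) * snd q"
    if q: "q \<in> attainable" for q
  proof -
    obtain ab s P where q_eq: "q = (gfun N zeta ab, hfun N s)" and "(ab, s) \<in> SSet N cup clo"
      and "P \<in> profiles" and ab: "\<forall>j<N. ab j = aggregate P j"
      using q unfolding mem_attainable_iff feasible_pairs_iff_profile by blast
    have "\<kappa> * fst p0 + (1 - \<kappa>) * snd p0 = F P0"
      unfolding p0_def F_def by simp
    also have "\<dots> \<le> F P"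
      using P0(2) \<open>P \<in> profiles\<close> by blast
    also have "F P = \<kappa> * gfun N zeta ab + (1 - \<kappa>) * hfun N (tube_slack N cup clo ab)"
      using ab unfolding F_def gfun_def hfun_tube_slack by simp
    also have "\<dots> \<le> \<kappa> * gfun N zeta ab + (1 - \<kappa>) * hfun N s"
      using hfun_tube_slack_le[OF \<open>(ab, s) \<in> SSet N cup clo\<close>] assms by (simp add: mult_left_mono)
    finally show ?thesis
      unfolding q_eq by simp
  qed
  ultimately show ?thesis
    by blast
qed

theorem minimizer_unique:
  assumes "0 < \<kappa>" "\<kappa> < 1"
    and "p1 \<in> attainable" "\<forall>q\<in>attainable. \<kappa> * fst p1 + (1 - \<kappa>) * snd p1 \<le> \<kappa> * fst q + (1 - \<kappa>) * snd q"
    and "p2 \<in> attainable" "\<forall>q\<in>attainable. \<kappa> * fst p2 + (1 - \<kappa>) * snd p2 \<le> \<kappa> * fst q + (1 - \<kappa>) * snd q"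
  shows "p1 = p2"
proof -
  obtain ab1 s1 ab2 s2 where feasible: "(ab1, s1) \<in> feasible_pairs" "(ab2, s2) \<in> feasible_pairs"
    and p1: "p1 = (gfun N zeta ab1, hfun N s1)" and p2: "p2 = (gfun N zeta ab2, hfun N s2)"
    using assms(3,5) unfolding mem_attainable_iff by blast
  define V where "V ab s = \<kappa> * gfun N zeta ab + (1 - \<kappa>) * hfun N s" for ab s
  define E1 where "E1 = (\<Sum>j<N. (ab1 j - ab2 j)^2) / N"
  define E2 where "E2 = (\<Sum>j<2*N. (s1 j - s2 j)^2)"
  define ab where "ab = (\<lambda>j. 1/2 * ab1 j + (1 - 1/2) * ab2 j)"
  define s where "s = (\<lambda>j. 1/2 * s1 j + (1 - 1/2) * s2 j)"
  have "(ab, s) \<in> feasible_pairs"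
    unfolding ab_def s_def using feasible by (rule feasible_pairs_convex_combination) auto
  then have "(gfun N zeta ab, hfun N s) \<in> attainable"
    unfolding mem_attainable_iff by blast
  then have "V ab1 s1 \<le> V ab s"
    using assms(4) unfolding p1 V_def by fastforce
  moreover have "V ab1 s1 = V ab2 s2"
    using assms(3-6) p1 p2 unfolding V_def by fastforce
  moreover have "V ab s = (V ab1 s1 + V ab2 s2) / 2 - (\<kappa> * E1 + (1 - \<kappa>) * E2) / 4"
  proof -
    have g: "gfun N zeta ab = (gfun N zeta ab1 + gfun N zeta ab2) / 2 - E1 / 4"
      unfolding ab_def gfun_convex_combination E1_def by (simp add: algebra_simps)
    have h: "hfun N s = (hfun N s1 + hfun N s2) / 2 - E2 / 4"
      unfolding s_def hfun_convex_combination E2_def by simp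
    show ?thesis
      unfolding V_def g h by (simp add: field_simps)
  qed
  ultimately have "\<kappa> * E1 + (1 - \<kappa>) * E2 \<le> 0"
    by argo
  moreover have "0 \<le> \<kappa> * E1" "0 \<le> (1 - \<kappa>) * E2"
    using assms(1,2) unfolding E1_def E2_def by (simp_all add: sum_nonneg)
  ultimately have "\<kappa> * E1 = 0" "(1 - \<kappa>) * E2 = 0"
    by argo+
  then have "E1 = 0" "E2 = 0"
    using assms(1,2) by simp_all
  then have "\<forall>j<N. ab1 j = ab2 j" "\<forall>j<2*N. s1 j = s2 j"
    unfolding E1_def E2_def by (auto simp: sum_nonneg_eq_0_iff)
  then show ?thesis
    unfolding p1 p2 gfun_def hfun_def by simp
qed

end

theorem corollary2:
  fixes II N :: nat and T \<kappa> :: real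
    and \<alpha> \<beta> \<gamma> C ul uh x0 :: "nat \<Rightarrow> real"
    and w :: "nat \<Rightarrow> nat \<Rightarrow> real"
    and zeta cup clo :: "nat \<Rightarrow> real"
  assumes "II \<ge> 1" and "N \<ge> 2" and "T > 0"
    and "\<forall>i\<in>{1..II}. 0 < \<alpha> i \<and> \<alpha> i \<le> 1 \<and> 0 < \<beta> i \<and> \<beta> i \<le> 1 \<and> 0 < \<gamma> i \<and> \<gamma> i \<le> 1"
    and "\<forall>i\<in>{1..II}. C i \<ge> 0 \<and> ul i < 0 \<and> 0 < uh i \<and> 0 \<le> x0 i \<and> x0 i \<le> C i"
    and "0 \<le> \<kappa>" and "\<kappa> \<le> 1"
  shows "(\<exists>p \<in> Sfeas II N T \<alpha> \<beta> \<gamma> C ul uh x0 w zeta cup clo.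
            \<forall>q \<in> Sfeas II N T \<alpha> \<beta> \<gamma> C ul uh x0 w zeta cup clo.
              \<kappa> * fst p + (1 - \<kappa>) * snd p \<le> \<kappa> * fst q + (1 - \<kappa>) * snd q)
       \<and> (0 < \<kappa> \<and> \<kappa> < 1 \<longrightarrow>
            (\<exists>!p. p \<in> Sfeas II N T \<alpha> \<beta> \<gamma> C ul uh x0 w zeta cup clo \<and>
              (\<forall>q \<in> Sfeas II N T \<alpha> \<beta> \<gamma> C ul uh x0 w zeta cup clo.
                 \<kappa> * fst p + (1 - \<kappa>) * snd p \<le> \<kappa> * fst q + (1 - \<kappa>) * snd q)))"
proof -
  interpret household_network II N T \<alpha> \<beta> \<gamma> C ul uh x0 w zeta cup clo
    using assms(4,5) by unfold_locales fastforce
  have "\<exists>p\<in>attainable. \<forall>q\<in>attainable.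
          \<kappa> * fst p + (1 - \<kappa>) * snd p \<le> \<kappa> * fst q + (1 - \<kappa>) * snd q"
    using assms(6,7) by (rule exists_minimizer)
  with minimizer_unique show ?thesis
    by blast
qed

end
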